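(* Let $H_n$ be a maximal outerplanar graph with $n$ vertices and diameter $3$. Then $H_n$ contains an induced subgraph isomorphic to $G_6^1$ or to $G_6^2$.
   Context: An outerplanar graph is a graph drawable in the plane without crossings with all vertices on the outer face; it is maximal outerplanar if adding any edge between two nonadjacent vertices yields a non-outerplanar graph. $G_6^1$ is the graph on vertices $v_0,\dots,v_5$ with edges $v_1v_0, v_0v_4, v_4v_3, v_3v_5, v_5v_2, v_2v_1, v_0v_2, v_0v_3, v_2v_3$. $G_6^2$ is the graph on vertices $v_0,\dots,v_5$ with edges $v_0v_1, v_1v_2, v_2v_0, v_0v_3, v_2v_3, v_3v_4, v_4v_0, v_3v_5, v_5v_4$ (the fan with center $v_0$ over the path $v_1v_2v_3v_4$, plus a vertex $v_5$ adjacent to $v_3$ and $v_4$). *)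

theory Defs
  imports Main
begin

definition simple_graph :: "'a set \<Rightarrow> 'a set set \<Rightarrow> bool" where
  "simple_graph V E \<longleftrightarrow> finite V \<and> (\<forall>e\<in>E. \<exists>u v. u \<in> V \<and> v \<in> V \<and> u \<noteq> v \<and> e = {u, v})"

text \<open>Two chords {a,b} and {c,d} of a convex polygon whose vertices are labelled
  0..n-1 in cyclic order cross iff their endpoints strictly interleave.\<close>
definition chords_cross :: "nat \<Rightarrow> nat \<Rightarrow> nat \<Rightarrow> nat \<Rightarrow> bool" where
  "chords_cross a b c d \<longleftrightarrow>
     (let a' = min a b; b' = max a b; c' = min c d; d' = max c d in
       (a' < c' \<and> c' < b' \<and> b' < d') \<or> (c' < a' \<and> a' < d' \<and> d' < b'))"

text \<open>Outerplanar: the graph admits a crossing-free drawing with all vertices on the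
  outer face, i.e. (equivalently, the standard combinatorial form of such a drawing)
  the vertices can be placed in some cyclic order on a circle, edges drawn as straight
  chords, with no two edges crossing.\<close>
definition outerplanar :: "'a set \<Rightarrow> 'a set set \<Rightarrow> bool" where
  "outerplanar V E \<longleftrightarrow> simple_graph V E \<and>
     (\<exists>p. bij_betw p V {..<card V} \<and>
        (\<forall>u v x y. {u, v} \<in> E \<longrightarrow> {x, y} \<in> E \<longrightarrow>
            \<not> chords_cross (p u) (p v) (p x) (p y)))"

definition maximal_outerplanar :: "'a set \<Rightarrow> 'a set set \<Rightarrow> bool" where
  "maximal_outerplanar V E \<longleftrightarrow> outerplanar V E \<and>
     (\<forall>u\<in>V. \<forall>v\<in>V. u \<noteq> v \<longrightarrow> {u, v} \<notin> E \<longrightarrow> \<not> outerplanar V (insert {u, v} E))"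

text \<open>A walk of length k from u to v: a vertex list of length k+1.\<close>
definition walk :: "'a set set \<Rightarrow> 'a list \<Rightarrow> bool" where
  "walk E xs \<longleftrightarrow> xs \<noteq> [] \<and> (\<forall>i. Suc i < length xs \<longrightarrow> {xs ! i, xs ! Suc i} \<in> E)"

definition dist_le :: "'a set set \<Rightarrow> 'a \<Rightarrow> 'a \<Rightarrow> nat \<Rightarrow> bool" where
  "dist_le E u v k \<longleftrightarrow> (\<exists>xs. walk E xs \<and> hd xs = u \<and> last xs = v \<and> length xs \<le> Suc k)"

definition has_diameter :: "'a set \<Rightarrow> 'a set set \<Rightarrow> nat \<Rightarrow> bool" where
  "has_diameter V E d \<longleftrightarrow> (\<forall>u\<in>V. \<forall>v\<in>V. dist_le E u v d) \<and>
     (\<exists>u\<in>V. \<exists>v\<in>V. \<not> dist_le E u v (d - 1))"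

text \<open>Graphs on vertices 0..5 (v_i = i).\<close>
definition G6_1 :: "nat set set" where
  "G6_1 = {{1,0}, {0,4}, {4,3}, {3,5}, {5,2}, {2,1}, {0,2}, {0,3}, {2,3}}"

definition G6_2 :: "nat set set" where
  "G6_2 = {{0,1}, {1,2}, {2,0}, {0,3}, {2,3}, {3,4}, {4,0}, {3,5}, {5,4}}"

definition has_induced_copy :: "'a set \<Rightarrow> 'a set set \<Rightarrow> nat \<Rightarrow> nat set set \<Rightarrow> bool" where
  "has_induced_copy V E k F \<longleftrightarrow> (\<exists>f. inj_on f {..<k} \<and> f ` {..<k} \<subseteq> V \<and>
     (\<forall>i<k. \<forall>j<k. i \<noteq> j \<longrightarrow> ({f i, f j} \<in> E \<longleftrightarrow> {i, j} \<in> F)))"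

end

theory Submission
  imports Defs
begin

text \<open>Number the vertices 0, ..., n-1 in the cyclic order of an outerplanar drawing. Maximality
  makes this a triangulated polygon: every non-edge crosses an edge. Rotate so that a vertex at
  distance 3 from some b becomes 0. The neighbours x < b < y of 0 closest to b span a triangle
  0 x y, and the triangle on the other side of the chord x y has an apex v, which differs from b.
  If v < b, then y has the three neighbours 0 < x < v before b. Let x' be the last neighbour of y
  before b, w and w0 the two neighbours of y preceding x', u the apex of the triangle on y x'
  (beyond b, as y is not adjacent to b) and z the apex of the triangle beyond x' u. These six
  vertices induce G6_2, since every missing edge would cross one that is present. The case
  v > b is the mirror image.\<close>

lemma ex_greatest_nat_below:
  fixes p b :: nat
  assumes "P p" "p < b"
  shows "\<exists>x. P x \<and> p \<le> x \<and> x < b \<and> (\<forall>z. x < z \<and> z < b \<longrightarrow> \<not> P z)"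
proof -
  obtain x where "P x \<and> p \<le> x \<and> x < b" and "\<forall>z. P z \<and> p \<le> z \<and> z < b \<longrightarrow> z \<le> x"
    using Nat.ex_has_greatest_nat[where P="\<lambda>z. P z \<and> p \<le> z \<and> z < b" and k=p and b=b] assms by auto
  then show ?thesis by force
qed

lemma ex_least_nat_above:
  fixes p b :: nat
  assumes "P p" "b < p"
  shows "\<exists>y. P y \<and> b < y \<and> y \<le> p \<and> (\<forall>z. b < z \<and> z < y \<longrightarrow> \<not> P z)"
proof -
  obtain y where "y \<le> p" "\<forall>z<y. \<not> (b < z \<and> P z)" "b < y \<and> P y"
    using ex_least_nat_le[of "\<lambda>z. b < z \<and> P z" p] assms by auto
  then show ?thesis by auto
qed

lemma chords_cross_swap: "chords_cross a b c d \<longleftrightarrow> chords_cross b a c d"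
  by (simp add: chords_cross_def Let_def min.commute max.commute)

lemma chords_cross_sym: "chords_cross a b c d \<longleftrightarrow> chords_cross c d a b"
  unfolding chords_cross_def Let_def by auto

lemma not_chords_cross_same: "{a, b} = {c, d} \<Longrightarrow> \<not> chords_cross a b c d"
  unfolding chords_cross_def Let_def doubleton_eq_iff by (auto simp: min_def max_def)

lemma chords_cross_interleaved: "a < c \<Longrightarrow> c < b \<Longrightarrow> b < d \<Longrightarrow> chords_cross a b c d"
  unfolding chords_cross_def Let_def by simp

lemma chords_cross_rotate_Suc:
  assumes "a < n" "b < n" "c < n" "d < n"
  shows "chords_cross (Suc a mod n) (Suc b mod n) (Suc c mod n) (Suc d mod n) = chords_cross a b c d"
  using assms unfolding chords_cross_def Let_def mod_Suc
  by (auto simp: min_def max_def split: if_splits)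

lemma chords_cross_rotate:
  assumes "a < n" "b < n" "c < n" "d < n"
  shows "chords_cross ((a + k) mod n) ((b + k) mod n) ((c + k) mod n) ((d + k) mod n) = chords_cross a b c d"
proof (induction k)
  case (Suc k)
  have "chords_cross ((a + Suc k) mod n) ((b + Suc k) mod n) ((c + Suc k) mod n) ((d + Suc k) mod n)
     = chords_cross (Suc ((a + k) mod n) mod n) (Suc ((b + k) mod n) mod n)
                    (Suc ((c + k) mod n) mod n) (Suc ((d + k) mod n) mod n)"
    by (simp add: mod_Suc_eq)
  also have "\<dots> = chords_cross ((a + k) mod n) ((b + k) mod n) ((c + k) mod n) ((d + k) mod n)"
    using assms by (intro chords_cross_rotate_Suc) auto
  finally show ?case using Suc by simp
qed (use assms in simp)

lemma chords_cross_antimono: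
  assumes anti: "\<And>x y. x \<in> S \<Longrightarrow> y \<in> S \<Longrightarrow> f x < f y \<longleftrightarrow> y < x"
    and "a \<in> S" "b \<in> S" "c \<in> S" "d \<in> S"
  shows "chords_cross (f a) (f b) (f c) (f d) = chords_cross a b c d"
proof -
  have min: "min (f x) (f y) = f (max x y)" and max: "max (f x) (f y) = f (min x y)"
    if "x \<in> S" "y \<in> S" for x y
    using anti[OF that] anti[OF that(2,1)] that by (auto simp: min_def max_def not_less)
  have "min x y \<in> S" "max x y \<in> S" if "x \<in> S" "y \<in> S" for x y
    using that by (auto simp: min_def max_def)
  then show ?thesis
    unfolding chords_cross_def Let_def using assms(2-5)
    by (simp add: min max anti) blast
qed

lemma chords_cross_reflect:
  assumes "a < n" "b < n" "c < n" "d < n"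
  shows "chords_cross ((n - a) mod n) ((n - b) mod n) ((n - c) mod n) ((n - d) mod n) = chords_cross a b c d"
proof -
  have reflect: "(n - x) mod n = ((n - 1 - x) + 1) mod n" if "x < n" for x
    using that by (simp add: Suc_diff_Suc)
  have "chords_cross (n - 1 - a) (n - 1 - b) (n - 1 - c) (n - 1 - d) = chords_cross a b c d"
    using assms by (intro chords_cross_antimono[where S = "{..<n}"]) auto
  with assms show ?thesis
    by (simp only: reflect chords_cross_rotate[of "n - 1 - a" n "n - 1 - b" "n - 1 - c" "n - 1 - d" 1])
qed

lemma simple_graph_edgeD:
  assumes "simple_graph V E" "{u, v} \<in> E"
  shows "u \<in> V" "v \<in> V" "u \<noteq> v"
proof -
  obtain x y where "x \<in> V" "y \<in> V" "x \<noteq> y" "{u, v} = {x, y}"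
    using assms(1)[unfolded simple_graph_def, THEN conjunct2, rule_format, OF assms(2)] by blast
  then show "u \<in> V" "v \<in> V" "u \<noteq> v" by (auto simp: doubleton_eq_iff)
qed

lemma simple_graph_edge_subset:
  assumes "simple_graph V E" "e \<in> E"
  shows "e \<subseteq> V"
proof -
  obtain u v where "u \<in> V" "v \<in> V" "e = {u, v}"
    using assms unfolding simple_graph_def by auto
  then show ?thesis by simp
qed

lemma image_edge_iff:
  assumes "inj_on f V" "\<forall>e\<in>E. e \<subseteq> V" "u \<in> V" "v \<in> V"
  shows "{f u, f v} \<in> (`) f ` E \<longleftrightarrow> {u, v} \<in> E"
proof
  assume "{f u, f v} \<in> (`) f ` E"
  then obtain e where e: "e \<in> E" "f ` e = f ` {u, v}" by auto
  have "e \<subseteq> V" "{u, v} \<subseteq> V" using assms(2-4) e(1) by auto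
  with e show "{u, v} \<in> E" using inj_on_image_eq_iff[OF assms(1)] by metis
next
  assume "{u, v} \<in> E"
  then show "{f u, f v} \<in> (`) f ` E" using image_eqI[of "{f u, f v}" "(`) f" "{u, v}"] by simp
qed

lemma image_edgeE:
  assumes "simple_graph V E" "{i, j} \<in> (`) f ` E"
  obtains u v where "{u, v} \<in> E" "i = f u" "j = f v"
proof -
  obtain u v where uv: "{u, v} \<in> E" "{i, j} = {f u, f v}"
    using assms unfolding simple_graph_def by auto
  then consider "i = f u" "j = f v" | "i = f v" "j = f u" by (auto simp: doubleton_eq_iff)
  then show thesis using that[of u v] that[of v u] uv(1) by cases (auto simp: insert_commute)
qed

lemma has_induced_copy_image:
  assumes inj: "inj_on f V" and edges: "\<forall>e\<in>E. e \<subseteq> V"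
    and copy: "has_induced_copy (f ` V) ((`) f ` E) k F"
  shows "has_induced_copy V E k F"
proof -
  obtain g where g: "inj_on g {..<k}" "g ` {..<k} \<subseteq> f ` V"
    and g_edges: "\<forall>i<k. \<forall>j<k. i \<noteq> j \<longrightarrow> ({g i, g j} \<in> (`) f ` E \<longleftrightarrow> {i, j} \<in> F)"
    using copy unfolding has_induced_copy_def by blast
  let ?h = "inv_into V f \<circ> g"
  have g_in: "g i \<in> f ` V" if "i < k" for i
    using g(2) that by auto
  have h_in: "?h i \<in> V" and f_h: "f (?h i) = g i" if "i < k" for i
    using inv_into_into[OF g_in[OF that]] f_inv_into_f[OF g_in[OF that]] by simp_all
  have "inj_on ?h {..<k}"
    using comp_inj_on[OF g(1) inj_on_inv_into[OF g(2)]] .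
  moreover have "{?h i, ?h j} \<in> E \<longleftrightarrow> {g i, g j} \<in> (`) f ` E" if "i < k" "j < k" for i j
    using image_edge_iff[OF inj edges h_in[OF that(1)] h_in[OF that(2)]] f_h that by simp
  ultimately show ?thesis
    unfolding has_induced_copy_def using h_in g_edges by (intro exI[of _ ?h]) auto
qed

definition far_apart :: "'a set set \<Rightarrow> 'a \<Rightarrow> 'a \<Rightarrow> bool" where
  "far_apart E a b \<longleftrightarrow> a \<noteq> b \<and> {a, b} \<notin> E \<and> (\<forall>c. {a, c} \<in> E \<longrightarrow> {c, b} \<notin> E)"

lemma far_apart_if_not_dist_le_2:
  assumes "\<not> dist_le E a b 2"
  shows "far_apart E a b"
proof -
  have "dist_le E a a 2"
    unfolding dist_le_def walk_def by (rule exI[of _ "[a]"]) auto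
  moreover have "dist_le E a b 2" if "{a, b} \<in> E"
    unfolding dist_le_def walk_def using that by (intro exI[of _ "[a, b]"]) (auto simp: less_Suc_eq)
  moreover have "dist_le E a b 2" if "{a, c} \<in> E" "{c, b} \<in> E" for c
    unfolding dist_le_def walk_def using that
    by (intro exI[of _ "[a, c, b]"]) (auto simp: less_Suc_eq nth_Cons split: nat.splits)
  ultimately show ?thesis using assms unfolding far_apart_def by blast
qed

lemma far_apart_image:
  assumes inj: "inj_on f V" and edges: "\<forall>e\<in>E. e \<subseteq> V"
    and "a \<in> V" "b \<in> V" "far_apart E a b"
  shows "far_apart ((`) f ` E) (f a) (f b)"
  unfolding far_apart_def
proof (intro conjI allI impI)
  show "f a \<noteq> f b" using assms unfolding far_apart_def inj_on_def by blast
  show "{f a, f b} \<notin> (`) f ` E"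
    using assms image_edge_iff[OF inj edges] unfolding far_apart_def by blast
  fix z assume "{f a, z} \<in> (`) f ` E"
  then obtain c where "c \<in> V" "z = f c" using edges by blast
  with assms \<open>{f a, z} \<in> (`) f ` E\<close> show "{z, f b} \<notin> (`) f ` E"
    using image_edge_iff[OF inj edges] unfolding far_apart_def by metis
qed

definition polygon_symmetry :: "nat \<Rightarrow> (nat \<Rightarrow> nat) \<Rightarrow> bool" where
  "polygon_symmetry n \<sigma> \<longleftrightarrow> bij_betw \<sigma> {..<n} {..<n} \<and>
     (\<forall>a<n. \<forall>b<n. \<forall>c<n. \<forall>d<n. chords_cross (\<sigma> a) (\<sigma> b) (\<sigma> c) (\<sigma> d) = chords_cross a b c d)"

lemma polygon_symmetry_rotate:
  assumes "k \<le> n"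
  shows "polygon_symmetry n (\<lambda>i. (i + k) mod n)"
proof -
  have inverse: "((i + l) mod n + (n - l)) mod n = i" if "i < n" "l \<le> n" for i l
  proof -
    have "((i + l) mod n + (n - l)) mod n = (i + l + (n - l)) mod n" by (rule mod_add_left_eq)
    also have "\<dots> = i" using that by simp
    finally show ?thesis .
  qed
  have "bij_betw (\<lambda>i. (i + k) mod n) {..<n} {..<n}"
    using assms inverse[of _ k] inverse[of _ "n - k"]
    by (intro bij_betw_byWitness[where f' = "\<lambda>i. (i + (n - k)) mod n"]) auto
  then show ?thesis unfolding polygon_symmetry_def using chords_cross_rotate by blast
qed

lemma polygon_symmetry_reflect: "polygon_symmetry n (\<lambda>i. (n - i) mod n)"
proof -
  have "bij_betw (\<lambda>i. (n - i) mod n) {..<n} {..<n}"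
    by (rule bij_betw_byWitness[where f' = "\<lambda>i. (n - i) mod n"]) (auto simp: mod_if)
  then show ?thesis unfolding polygon_symmetry_def using chords_cross_reflect by blast
qed

locale polygon_triangulation =
  fixes n :: nat and E :: "nat set set"
  assumes simple: "simple_graph {..<n} E"
    and noncrossing: "{i, j} \<in> E \<Longrightarrow> {k, l} \<in> E \<Longrightarrow> \<not> chords_cross i j k l"
    and maximal: "i < n \<Longrightarrow> j < n \<Longrightarrow> i \<noteq> j \<Longrightarrow> {i, j} \<notin> E \<Longrightarrow>
                    \<exists>k l. {k, l} \<in> E \<and> chords_cross i j k l"

lemma polygon_triangulation_image:
  assumes simple: "simple_graph V E" and p: "bij_betw p V {..<n}"
    and noncrossing: "\<And>u v x y. {u, v} \<in> E \<Longrightarrow> {x, y} \<in> E \<Longrightarrow>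
                        \<not> chords_cross (p u) (p v) (p x) (p y)"
    and maximal: "\<And>u v. u \<in> V \<Longrightarrow> v \<in> V \<Longrightarrow> u \<noteq> v \<Longrightarrow> {u, v} \<notin> E \<Longrightarrow>
                    \<exists>x y. {x, y} \<in> E \<and> chords_cross (p u) (p v) (p x) (p y)"
  shows "polygon_triangulation n ((`) p ` E)"
proof
  have inj: "inj_on p V" and onto: "p ` V = {..<n}"
    using p by (auto simp: bij_betw_def)
  have edges: "\<forall>e\<in>E. e \<subseteq> V" using simple_graph_edge_subset[OF simple] by blast
  show "simple_graph {..<n} ((`) p ` E)"
    unfolding simple_graph_def
  proof (intro conjI ballI)
    fix e' assume "e' \<in> (`) p ` E"
    then obtain u v where "{u, v} \<in> E" "e' = {p u, p v}"
      using simple unfolding simple_graph_def by auto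
    with simple_graph_edgeD[OF simple] inj onto show "\<exists>i j. i \<in> {..<n} \<and> j \<in> {..<n} \<and> i \<noteq> j \<and> e' = {i, j}"
      by (metis image_eqI inj_on_contraD)
  qed simp
  show "\<not> chords_cross i j k l" if "{i, j} \<in> (`) p ` E" "{k, l} \<in> (`) p ` E" for i j k l
    using that noncrossing by (elim image_edgeE[OF simple]) blast
  show "\<exists>k l. {k, l} \<in> (`) p ` E \<and> chords_cross i j k l"
    if ij: "i < n" "j < n" "i \<noteq> j" "{i, j} \<notin> (`) p ` E" for i j
  proof -
    obtain u v where uv: "u \<in> V" "v \<in> V" "i = p u" "j = p v"
      using ij(1,2) onto by (metis imageE lessThan_iff)
    then have "u \<noteq> v" "{u, v} \<notin> E" using ij(3,4) image_edge_iff[OF inj edges] by auto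
    then obtain x y where "{x, y} \<in> E" "chords_cross i j (p x) (p y)"
      using maximal uv by blast
    then show ?thesis using image_eqI[of "{p x, p y}" "(`) p" "{x, y}" E] by auto
  qed
qed

lemma maximal_outerplanar_nonedge_crosses:
  assumes mop: "maximal_outerplanar V E" and p: "bij_betw p V {..<card V}"
    and noncrossing: "\<And>u v x y. {u, v} \<in> E \<Longrightarrow> {x, y} \<in> E \<Longrightarrow>
                        \<not> chords_cross (p u) (p v) (p x) (p y)"
    and uv: "u \<in> V" "v \<in> V" "u \<noteq> v" "{u, v} \<notin> E"
  shows "\<exists>x y. {x, y} \<in> E \<and> chords_cross (p u) (p v) (p x) (p y)"
proof -
  have "simple_graph V E"
    using mop unfolding maximal_outerplanar_def outerplanar_def by simp
  then have "simple_graph V (insert {u, v} E)"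
    using uv(1-3) unfolding simple_graph_def by auto
  moreover have "\<not> outerplanar V (insert {u, v} E)"
    using mop uv unfolding maximal_outerplanar_def by simp
  ultimately obtain a b x y where ab: "{a, b} \<in> insert {u, v} E" and xy: "{x, y} \<in> insert {u, v} E"
    and cross: "chords_cross (p a) (p b) (p x) (p y)"
    using p unfolding outerplanar_def by meson
  have cross_uv: "chords_cross (p a) (p b) c d = chords_cross (p u) (p v) c d"
    if "{a, b} = {u, v}" for a b c d
    using that chords_cross_swap by (auto simp: doubleton_eq_iff)
  consider "{a, b} = {u, v}" "{x, y} = {u, v}" | "{a, b} = {u, v}" "{x, y} \<in> E"
    | "{a, b} \<in> E" "{x, y} = {u, v}" | "{a, b} \<in> E" "{x, y} \<in> E"
    using ab xy by (meson insert_iff)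
  then show ?thesis
  proof cases
    case 1
    then show ?thesis using cross not_chords_cross_same cross_uv chords_cross_sym by metis
  next
    case 2
    then show ?thesis using cross cross_uv by metis
  next
    case 3
    then show ?thesis using cross cross_uv chords_cross_sym by metis
  next
    case 4
    then show ?thesis using cross noncrossing by blast
  qed
qed

context polygon_triangulation
begin

lemma edgeD:
  assumes "{i, j} \<in> E"
  shows "i < n" "j < n" "i \<noteq> j"
  using simple_graph_edgeD[OF simple assms] by auto

lemma edges_subset: "\<forall>e\<in>E. e \<subseteq> {..<n}"
  using simple_graph_edge_subset[OF simple] by blast

lemma edge_Suc:
  assumes "Suc i < n"
  shows "{i, Suc i} \<in> E"
proof (rule ccontr)
  assume "{i, Suc i} \<notin> E"
  then obtain k l where "chords_cross i (Suc i) k l"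
    using maximal[of i "Suc i"] assms by auto
  then show False unfolding chords_cross_def Let_def by (auto simp: min_def max_def split: if_splits)
qed

lemma edge_0_last:
  assumes "1 < n"
  shows "{0, n - 1} \<in> E"
proof (rule ccontr)
  assume "{0, n - 1} \<notin> E"
  then obtain k l where "{k, l} \<in> E" "chords_cross 0 (n - 1) k l"
    using maximal[of 0 "n - 1"] assms by auto
  moreover from \<open>{k, l} \<in> E\<close> have "k < n" "l < n" by (auto dest: edgeD)
  ultimately show False unfolding chords_cross_def Let_def by (auto simp: min_def max_def split: if_splits)
qed

lemma interleaved_edges: "a < c \<Longrightarrow> c < b \<Longrightarrow> b < d \<Longrightarrow> {a, b} \<in> E \<Longrightarrow> {c, d} \<notin> E"
  using noncrossing chords_cross_interleaved by blast

lemma consecutive_neighbors_adjacent: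
  assumes cx: "{c, x} \<in> E" and cy: "{c, y} \<in> E" and "x < y" and "c < x \<or> y < c"
    and gap: "\<And>z. x < z \<Longrightarrow> z < y \<Longrightarrow> {c, z} \<notin> E"
  shows "{x, y} \<in> E"
proof (rule ccontr)
  assume "{x, y} \<notin> E"
  moreover have "x < n" "y < n" using edgeD(2)[OF cx] edgeD(2)[OF cy] .
  ultimately obtain k l where kl: "{k, l} \<in> E" "chords_cross x y k l"
    using maximal \<open>x < y\<close> by blast
  have "\<not> chords_cross c x k l" "\<not> chords_cross c y k l"
    using noncrossing cx cy kl(1) by auto
  moreover have "\<not> (x < k \<and> k < y \<and> l = c)" "\<not> (x < l \<and> l < y \<and> k = c)"
    using gap kl(1) insert_commute by metis+
  \<comment> \<open>so the edge k l would have to cross c x or c y\<close>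
  ultimately show False using kl(2) assms(3,4) unfolding chords_cross_def Let_def
    by (auto simp: min_def max_def split: if_splits)
qed

lemma triangle_apex_between:
  assumes cy: "{c, y} \<in> E" and cp: "{c, p} \<in> E" and "p < y" and "c < p \<or> y < c"
  obtains x where "p \<le> x" "x < y" "{c, x} \<in> E" "{x, y} \<in> E"
proof -
  obtain x where x: "{c, x} \<in> E" "p \<le> x" "x < y" and gap: "\<forall>z. x < z \<and> z < y \<longrightarrow> {c, z} \<notin> E"
    using ex_greatest_nat_below[of "\<lambda>z. {c, z} \<in> E" p y] cp \<open>p < y\<close> by blast
  have "{x, y} \<in> E"
    using consecutive_neighbors_adjacent[OF x(1) cy x(3)] assms(4) x(2) gap by auto
  with x that show thesis by blast
qed

lemma chord_apex:
  assumes xy: "{x, y} \<in> E" and "Suc x < y"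
  obtains z where "x < z" "z < y" "{x, z} \<in> E" "{z, y} \<in> E"
proof -
  have "{x, Suc x} \<in> E" using edge_Suc edgeD(2)[OF xy] \<open>Suc x < y\<close> by simp
  then show thesis
    using triangle_apex_between[OF xy _ \<open>Suc x < y\<close>] that by (metis Suc_le_eq lessI)
qed

lemma relabel:
  assumes "polygon_symmetry n \<sigma>"
  shows "polygon_triangulation n ((`) \<sigma> ` E)"
proof (rule polygon_triangulation_image[OF simple])
  have \<sigma>: "bij_betw \<sigma> {..<n} {..<n}"
    and cross: "\<And>a b c d. a < n \<Longrightarrow> b < n \<Longrightarrow> c < n \<Longrightarrow> d < n \<Longrightarrow>
                  chords_cross (\<sigma> a) (\<sigma> b) (\<sigma> c) (\<sigma> d) = chords_cross a b c d"
    using assms unfolding polygon_symmetry_def by auto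
  show "bij_betw \<sigma> {..<n} {..<n}" by (fact \<sigma>)
  show "\<not> chords_cross (\<sigma> u) (\<sigma> v) (\<sigma> x) (\<sigma> y)"
    if uv: "{u, v} \<in> E" and xy: "{x, y} \<in> E" for u v x y
    using noncrossing[OF uv xy] cross[OF edgeD(1,2)[OF uv] edgeD(1,2)[OF xy]] by simp
  show "\<exists>x y. {x, y} \<in> E \<and> chords_cross (\<sigma> u) (\<sigma> v) (\<sigma> x) (\<sigma> y)"
    if uv: "u \<in> {..<n}" "v \<in> {..<n}" "u \<noteq> v" "{u, v} \<notin> E" for u v
  proof -
    obtain x y where xy: "{x, y} \<in> E" "chords_cross u v x y"
      using maximal uv by (meson lessThan_iff)
    then show ?thesis using cross[of u v x y] edgeD(1,2)[OF xy(1)] uv(1,2) by auto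
  qed
qed

lemma relabel_edge_iff:
  assumes "polygon_symmetry n \<sigma>" "i < n" "j < n"
  shows "{\<sigma> i, \<sigma> j} \<in> (`) \<sigma> ` E \<longleftrightarrow> {i, j} \<in> E"
proof -
  have "inj_on \<sigma> {..<n}" using assms(1) by (simp add: polygon_symmetry_def bij_betw_def)
  then show ?thesis
    using image_edge_iff[OF _ edges_subset] assms(2,3) by simp
qed

lemma has_induced_copy_relabel:
  assumes "polygon_symmetry n \<sigma>" "has_induced_copy {..<n} ((`) \<sigma> ` E) k F"
  shows "has_induced_copy {..<n} E k F"
proof -
  have inj: "inj_on \<sigma> {..<n}" and onto: "\<sigma> ` {..<n} = {..<n}"
    using assms(1) by (simp_all add: polygon_symmetry_def bij_betw_def)
  then show ?thesis
    using has_induced_copy_image[OF inj edges_subset, of k F] assms(2) by simp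
qed

lemma induced_G6_2_of_fan:
  assumes order: "w0 < w" "w < x" "x < z" "z < u" "u < c"
    and edges: "{c, w0} \<in> E" "{w0, w} \<in> E" "{c, w} \<in> E" "{c, x} \<in> E" "{w, x} \<in> E"
      "{x, u} \<in> E" "{c, u} \<in> E" "{x, z} \<in> E" "{z, u} \<in> E"
  shows "has_induced_copy {..<n} E 6 G6_2"
proof -
  have "{w, c} \<in> E" "{x, c} \<in> E" using edges(3,4) by (simp_all add: insert_commute)
  then have non_edges: "{c, z} \<notin> E" "{w0, x} \<notin> E" "{w0, u} \<notin> E" "{w0, z} \<notin> E"
      "{w, u} \<notin> E" "{w, z} \<notin> E"
    using interleaved_edges[of x z u c] interleaved_edges[of w0 w x c] interleaved_edges[of w0 w u c]
      interleaved_edges[of w0 w z c] interleaved_edges[of w x u c] interleaved_edges[of w x z c]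
      order edges(6) by (auto simp: insert_commute[of c z])
  define f where "f = (!) [c, w0, w, x, u, z]"
  have "inj_on f {..<6}"
    unfolding f_def by (rule inj_on_nth) (use order in auto)
  moreover have "f ` {..<6} \<subseteq> {..<n}"
    using edgeD(1,2)[OF edges(1)] edgeD(1,2)[OF edges(3)] edgeD(1,2)[OF edges(4)]
      edgeD(1,2)[OF edges(6)] edgeD(1,2)[OF edges(8)]
    unfolding f_def by (auto simp: less_Suc_eq numeral_eq_Suc)
  moreover have "\<forall>i<6. \<forall>j<6. i \<noteq> j \<longrightarrow> ({f i, f j} \<in> E \<longleftrightarrow> {i, j} \<in> G6_2)"
    using edges non_edges order unfolding f_def G6_2_def
    by (simp add: All_less_Suc numeral_eq_Suc insert_commute doubleton_eq_iff)
  ultimately show ?thesis unfolding has_induced_copy_def by blast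
qed

lemma induced_G6_2_of_fan_around_nonneighbor:
  assumes "p0 < p1" "p1 < p2" "p2 < b" "b < c"
    and cp: "{c, p0} \<in> E" "{c, p1} \<in> E" "{c, p2} \<in> E" and cb: "{c, b} \<notin> E"
  shows "has_induced_copy {..<n} E 6 G6_2"
proof -
  obtain x where x: "{c, x} \<in> E" "p2 \<le> x" "x < b" and gap: "\<forall>y. x < y \<and> y < b \<longrightarrow> {c, y} \<notin> E"
    using ex_greatest_nat_below[of "\<lambda>y. {c, y} \<in> E" p2 b] cp(3) \<open>p2 < b\<close> by blast
  have "{x, c} \<in> E" "Suc x < c" using x(1,3) \<open>b < c\<close> by (simp_all add: insert_commute)
  then obtain u where u: "x < u" "u < c" "{x, u} \<in> E" "{u, c} \<in> E"
    by (rule chord_apex)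
  have "{c, u} \<in> E" using u(4) by (simp add: insert_commute)
  then have "u \<noteq> b" "\<not> u < b" using cb gap u(1) by auto
  then have "Suc x < u" using x(3) by linarith
  then obtain z where z: "x < z" "z < u" "{x, z} \<in> E" "{z, u} \<in> E"
    by (rule chord_apex[OF u(3)])
  have "p1 < x" "x < c" using assms(2-4) x(2,3) by linarith+
  then obtain w where w: "p1 \<le> w" "w < x" "{c, w} \<in> E" "{w, x} \<in> E"
    by (blast intro: triangle_apex_between[OF x(1) cp(2)])
  have "p0 < w" "w < c" using \<open>p0 < p1\<close> w(1,2) \<open>x < c\<close> by linarith+
  then obtain w0 where w0: "p0 \<le> w0" "w0 < w" "{c, w0} \<in> E" "{w0, w} \<in> E"
    by (blast intro: triangle_apex_between[OF w(3) cp(1)])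
  show ?thesis
    by (rule induced_G6_2_of_fan[of w0 w x z u c]) (use w0 w x z u \<open>{c, u} \<in> E\<close> in auto)
qed

lemma separating_triangle_at_0:
  assumes "0 < b" "b < n" "{0, b} \<notin> E"
  obtains x y where "0 < x" "x < b" "b < y" "{0, x} \<in> E" "{0, y} \<in> E" "{x, y} \<in> E"
proof -
  have "{0, 1} \<in> E" using edge_Suc[of 0] assms(1,2) by simp
  with assms have "1 < b" by (cases "b = 1") auto
  have "{0, n - 1} \<in> E" using edge_0_last assms(1,2) by simp
  with assms have "b < n - 1" by (cases "b = n - 1") auto
  obtain x where x: "{0, x} \<in> E" "1 \<le> x" "x < b" and gap_x: "\<forall>z. x < z \<and> z < b \<longrightarrow> {0, z} \<notin> E"
    using ex_greatest_nat_below[of "\<lambda>z. {0, z} \<in> E" 1 b] \<open>{0, 1} \<in> E\<close> \<open>1 < b\<close> by blast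
  obtain y where y: "{0, y} \<in> E" "b < y" and gap_y: "\<forall>z. b < z \<and> z < y \<longrightarrow> {0, z} \<notin> E"
    using ex_least_nat_above[of "\<lambda>z. {0, z} \<in> E" "n - 1" b] \<open>{0, n - 1} \<in> E\<close> \<open>b < n - 1\<close> by blast
  have "{x, y} \<in> E"
  proof (rule consecutive_neighbors_adjacent[OF x(1) y(1)])
    show "x < y" "0 < x \<or> y < 0" using x y by auto
    show "{0, z} \<notin> E" if "x < z" "z < y" for z
      using gap_x gap_y assms(3) that by (cases z b rule: linorder_cases) auto
  qed
  moreover have "0 < x" using x(2) by simp
  ultimately show thesis using that x y by blast
qed

lemma induced_G6_2_if_far_from_0:
  assumes "0 < b" "b < n" "far_apart E 0 b"
  shows "has_induced_copy {..<n} E 6 G6_2"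
proof -
  have no_common: "{v, b} \<notin> E" if "{0, v} \<in> E" for v
    using assms(3) that unfolding far_apart_def by blast
  obtain x y where xy: "0 < x" "x < b" "b < y" "{0, x} \<in> E" "{0, y} \<in> E" "{x, y} \<in> E"
    using separating_triangle_at_0 assms unfolding far_apart_def by blast
  have "Suc x < y" using xy(2,3) by linarith
  then obtain v where v: "x < v" "v < y" "{x, v} \<in> E" "{v, y} \<in> E"
    by (rule chord_apex[OF xy(6)])
  have "v \<noteq> b" using no_common[OF xy(4)] v(3) by auto
  then consider "v < b" | "b < v" by linarith
  then show ?thesis
  proof cases
    case 1
    show ?thesis
      by (rule induced_G6_2_of_fan_around_nonneighbor[of 0 x v b y])
        (use xy v 1 no_common[OF xy(5)] in \<open>auto simp: insert_commute\<close>)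
  next
    case 2
    define \<rho> where "\<rho> i = (n - i) mod n" for i
    have \<rho>: "polygon_symmetry n \<rho>"
      unfolding \<rho>_def by (rule polygon_symmetry_reflect)
    interpret mirror: polygon_triangulation n "(`) \<rho> ` E"
      by (rule relabel[OF \<rho>])
    have "y < n" using edgeD(2)[OF xy(5)] .
    then have "\<rho> 0 = 0" "\<rho> y < \<rho> v" "\<rho> v < \<rho> b" "\<rho> b < \<rho> x" "0 < \<rho> y"
      using xy v 2 by (auto simp: \<rho>_def)
    moreover have "{\<rho> x, \<rho> 0} \<in> (`) \<rho> ` E" "{\<rho> x, \<rho> y} \<in> (`) \<rho> ` E"
      "{\<rho> x, \<rho> v} \<in> (`) \<rho> ` E" "{\<rho> x, \<rho> b} \<notin> (`) \<rho> ` E"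
      using relabel_edge_iff[OF \<rho>] xy v no_common[OF xy(4)] \<open>y < n\<close> assms(2)
      by (auto simp: insert_commute)
    ultimately have "has_induced_copy {..<n} ((`) \<rho> ` E) 6 G6_2"
      using mirror.induced_G6_2_of_fan_around_nonneighbor[of "\<rho> 0" "\<rho> y" "\<rho> v" "\<rho> b" "\<rho> x"] by simp
    then show ?thesis by (rule has_induced_copy_relabel[OF \<rho>])
  qed
qed

lemma induced_G6_2_if_far:
  assumes "a < n" "b < n" "far_apart E a b"
  shows "has_induced_copy {..<n} E 6 G6_2"
proof -
  define \<rho> where "\<rho> i = (i + (n - a)) mod n" for i
  have \<rho>: "polygon_symmetry n \<rho>"
    unfolding \<rho>_def by (rule polygon_symmetry_rotate) simp
  interpret rotated: polygon_triangulation n "(`) \<rho> ` E"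
    by (rule relabel[OF \<rho>])
  have "inj_on \<rho> {..<n}" using \<rho> by (simp add: polygon_symmetry_def bij_betw_def)
  then have far: "far_apart ((`) \<rho> ` E) (\<rho> a) (\<rho> b)"
    using far_apart_image[OF _ edges_subset] assms by simp
  moreover have "\<rho> a = 0" "\<rho> b < n" using assms(1,2) by (auto simp: \<rho>_def)
  moreover from far have "\<rho> a \<noteq> \<rho> b" by (simp add: far_apart_def)
  ultimately have "has_induced_copy {..<n} ((`) \<rho> ` E) 6 G6_2"
    using rotated.induced_G6_2_if_far_from_0[of "\<rho> b"] by simp
  then show ?thesis by (rule has_induced_copy_relabel[OF \<rho>])
qed

end

theorem theorem3p2:
  fixes V :: "'a set" and E :: "'a set set"
  assumes "maximal_outerplanar V E"
    and "has_diameter V E 3"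
  shows "has_induced_copy V E 6 G6_1 \<or> has_induced_copy V E 6 G6_2"
proof -
  have simple: "simple_graph V E"
    using assms(1) unfolding maximal_outerplanar_def outerplanar_def by simp
  then have edges: "\<forall>e\<in>E. e \<subseteq> V" using simple_graph_edge_subset by blast
  obtain p where p: "bij_betw p V {..<card V}"
    and noncrossing: "\<And>u v x y. {u, v} \<in> E \<Longrightarrow> {x, y} \<in> E \<Longrightarrow> \<not> chords_cross (p u) (p v) (p x) (p y)"
    using assms(1) unfolding maximal_outerplanar_def outerplanar_def by blast
  have inj: "inj_on p V" and onto: "p ` V = {..<card V}" using p by (auto simp: bij_betw_def)
  interpret polygon_triangulation "card V" "(`) p ` E"
    using simple p noncrossing maximal_outerplanar_nonedge_crosses[OF assms(1) p noncrossing]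
    by (rule polygon_triangulation_image)
  obtain a b where ab: "a \<in> V" "b \<in> V" "\<not> dist_le E a b 2"
    using assms(2) unfolding has_diameter_def by auto
  have "has_induced_copy {..<card V} ((`) p ` E) 6 G6_2"
  proof (rule induced_G6_2_if_far)
    show "p a < card V" "p b < card V" using ab(1,2) onto by auto
    show "far_apart ((`) p ` E) (p a) (p b)"
      using far_apart_image[OF inj edges ab(1,2) far_apart_if_not_dist_le_2[OF ab(3)]] .
  qed
  then have "has_induced_copy V E 6 G6_2"
    using has_induced_copy_image[OF inj edges] onto by simp
  then show ?thesis ..
qed

end
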